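(* Fix a sequence $q_1,q_2,\dots$ of probability measures on $\mathbb{N}_0$ (a varying environment), $n\ge1$ and $z\ge1$, with notation as in the context. Then $$\mathbb{P}\big(\hat Z^{(0)}_n+\dots+\hat Z^{(n-1)}_n=0\big)=\prod_{k=0}^{n-1}\mathbb{P}\big(\hat Z^{(k)}_n=0\big)=\frac{\mathsf p_{n-1,n}}{\mathsf p_{-1,n}}\prod_{k=0}^{n-1}f_k'\big(f_{k,n}(0)\big),$$ with the convention $f_0(s):=s^z$.
   Context: Let $f_k$ be the p.g.f. of $q_k$, $f_{k,n}=f_{k+1}\circ\dots\circ f_n$, $f_{n,n}$ the identity. $(Z_j)$ is the branching process in varying environment: given $Z_{j-1}$, $Z_j$ is a sum of $Z_{j-1}$ i.i.d. variables of law $q_j$. Put $\mathsf p_{k,n}=1-f_{k,n}(0)$ for $0\le k<n$, $\mathsf p_{n,n}=1$, and $\mathsf p_{-1,n}=1-f_{0,n}(0)^z$ (the probability that $Z_n>0$ when $Z_0=z$); assume $\mathsf p_{k,n}>0$ for $-1\le k\le n$. Let $\hat Y_0,\dots,\hat Y_n$ be independent with $\mathbb{P}(\hat Y_0=i)=\frac{1-f_{0,n}(0)}{\mathsf p_{-1,n}}f_{0,n}(0)^{z-i-1}$ for $0\le i\le z-1$, and for $1\le k\le n$, $i\ge0$, $\mathbb{P}(\hat Y_k=i)=\frac{\mathsf p_{k,n}}{\mathsf p_{k-1,n}}\sum_{j\ge i+1}q_k(j)f_{k,n}(0)^{j-i-1}$. For $0\le k\le n$, let $(\hat Z^{(k)}_j)_{j\ge0}$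 be independent processes with $\hat Z^{(k)}_j=0$ for $j<k$, $\hat Z^{(k)}_k=\hat Y_k$, and for $j>k$, given $\hat Z^{(k)}_{j-1}$, $\hat Z^{(k)}_j$ is a sum of $\hat Z^{(k)}_{j-1}$ i.i.d. variables of law $q_j$. *)

theory Defs
  imports "HOL-Analysis.Analysis" "HOL-Probability.Probability"
begin

text \<open>Environment: q k is the offspring law of generation k (k \<ge> 1); q 0 is unused.\<close>

definition pgf :: "nat pmf \<Rightarrow> real \<Rightarrow> real" where
  "pgf p s = (\<Sum>j. pmf p j * s ^ j)"

text \<open>f_{k,n} = f_{k+1} o ... o f_n, identity if n \<le> k.\<close>
fun fcomp :: "(nat \<Rightarrow> nat pmf) \<Rightarrow> nat \<Rightarrow> nat \<Rightarrow> real \<Rightarrow> real" where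
  "fcomp q k 0 s = s"
| "fcomp q k (Suc n) s = (if k \<le> n then fcomp q k n (pgf (q (Suc n)) s) else s)"

definition fgen :: "(nat \<Rightarrow> nat pmf) \<Rightarrow> nat \<Rightarrow> nat \<Rightarrow> real \<Rightarrow> real" where
  "fgen q z k = (if k = 0 then (\<lambda>s. s ^ z) else pgf (q k))"

text \<open>p_{k,n} for 0 \<le> k \<le> n (note p_{n,n} = 1 - 0 = 1), and p_{-1,n}.\<close>
definition pp :: "(nat \<Rightarrow> nat pmf) \<Rightarrow> nat \<Rightarrow> nat \<Rightarrow> real" where
  "pp q k n = 1 - fcomp q k n 0"

definition pm1 :: "(nat \<Rightarrow> nat pmf) \<Rightarrow> nat \<Rightarrow> nat \<Rightarrow> real" where
  "pm1 q z n = 1 - fcomp q 0 n 0 ^ z"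

fun sum_iid :: "nat pmf \<Rightarrow> nat \<Rightarrow> nat pmf" where
  "sum_iid p 0 = return_pmf 0"
| "sum_iid p (Suc m) = bind_pmf p (\<lambda>a. map_pmf (\<lambda>b. a + b) (sum_iid p m))"

text \<open>Law at time n of the branching process in environment q started at time k with law \<mu>.\<close>
fun evolve :: "(nat \<Rightarrow> nat pmf) \<Rightarrow> nat \<Rightarrow> nat pmf \<Rightarrow> nat \<Rightarrow> nat pmf" where
  "evolve q k \<mu> 0 = \<mu>"
| "evolve q k \<mu> (Suc n) = (if k \<le> n then bind_pmf (evolve q k \<mu> n) (\<lambda>x. sum_iid (q (Suc n)) x) else \<mu>)"

definition Yhat :: "(nat \<Rightarrow> nat pmf) \<Rightarrow> nat \<Rightarrow> nat \<Rightarrow> nat \<Rightarrow> nat pmf" where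
  "Yhat q z n k = (if k = 0 then
      embed_pmf (\<lambda>i. if i \<le> z - 1 then
         (1 - fcomp q 0 n 0) / pm1 q z n * fcomp q 0 n 0 ^ (z - i - 1) else 0)
    else
      embed_pmf (\<lambda>i. pp q k n / pp q (k - 1) n *
         (\<Sum>j. pmf (q k) (j + i + 1) * fcomp q k n 0 ^ j)))"

definition Zhat_law :: "(nat \<Rightarrow> nat pmf) \<Rightarrow> nat \<Rightarrow> nat \<Rightarrow> nat \<Rightarrow> nat pmf" where
  "Zhat_law q z n k = evolve q k (Yhat q z n k) n"

end

(* By independence the probability of the event factorizes. Each process started at time k
   dies out by time n independently along each of its initial individuals, so
   P(Zhat^(k)_n = 0) is the generating function of Yhat_k evaluated at s = f_{k,n}(0).
   For k >= 1 the law of Yhat_k is a normalized tail law of q_k, and summing along the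
   diagonals i + j = m turns its generating function at s into f_k'(s) times the
   normalizing constant p_{k,n} / p_{k-1,n}; for k = 0 it is a truncated geometric law whose
   generating function at s is z s^(z-1) (1 - s) / (1 - s^z) = f_0'(s) p_{0,n} / p_{-1,n}.
   The normalizing constants telescope to p_{n-1,n} / p_{-1,n}. *)

theory Submission
  imports Defs
begin

lemma pmf_nat_sums_1: "pmf (p :: nat pmf) sums 1"
proof -
  have "(\<integral>\<^sup>+j. ennreal (pmf p j) \<partial>count_space UNIV) = emeasure (measure_pmf p) UNIV"
    by (rule nn_integral_pmf)
  then have "(\<lambda>j. ennreal (pmf p j)) sums ennreal 1"
    using measure_pmf.emeasure_space_1[of p]
    by (metis nn_integral_count_space_nat ennreal_1 summableI summable_sums space_measure_pmf)
  then show ?thesis by (metis pmf_nonneg sums_ennreal zero_le_one)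
qed

lemma summable_pgf_series:
  fixes x :: real
  assumes "\<bar>x\<bar> \<le> 1"
  shows "summable (\<lambda>j. pmf p j * x ^ j)"
proof (rule summable_comparison_test'[OF sums_summable[OF pmf_nat_sums_1[of p]]])
  fix j show "norm (pmf p j * x ^ j) \<le> pmf p j"
    using assms by (simp add: abs_mult power_abs mult_left_le power_le_one)
qed

lemma pgf_sums: "\<bar>x\<bar> \<le> 1 \<Longrightarrow> (\<lambda>j. pmf p j * x ^ j) sums pgf p x"
  unfolding pgf_def using summable_pgf_series summable_sums by blast

lemma pgf_in_unit_interval:
  assumes "0 \<le> s" "s \<le> 1"
  shows "0 \<le> pgf p s" "pgf p s \<le> 1"
proof -
  show "0 \<le> pgf p s"
    unfolding pgf_def using assms by (intro suminf_nonneg summable_pgf_series) auto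
  have "pgf p s \<le> (\<Sum>j. pmf p j)"
    unfolding pgf_def using assms
    by (intro suminf_le summable_pgf_series sums_summable[OF pmf_nat_sums_1])
       (auto simp: mult_left_le power_le_one)
  then show "pgf p s \<le> 1" using pmf_nat_sums_1 sums_unique by metis
qed

lemma diffs_pmf_sums_deriv_pgf:
  fixes s :: real
  assumes "\<bar>s\<bar> < 1"
  shows "(\<lambda>m. diffs (pmf p) m * s ^ m) sums deriv (pgf p) s"
proof -
  have pgf_eq: "pgf p = (\<lambda>x. \<Sum>m. pmf p m * x ^ m)" by (simp add: fun_eq_iff pgf_def)
  have "(pgf p has_field_derivative (\<Sum>m. diffs (pmf p) m * s ^ m)) (at s)"
    unfolding pgf_eq using assms by (intro termdiffs_strong'[where K=1] summable_pgf_series) auto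
  then have "deriv (pgf p) s = (\<Sum>m. diffs (pmf p) m * s ^ m)" by (rule DERIV_imp_deriv)
  moreover have "summable (\<lambda>m. diffs (pmf p) m * s ^ m)"
    using assms by (intro termdiff_converges[where K=1] summable_pgf_series) auto
  ultimately show ?thesis by (simp add: summable_sums)
qed

lemma deriv_pgf_nonneg:
  assumes "0 \<le> s" "s < 1"
  shows "0 \<le> deriv (pgf p) s"
proof -
  have sums: "(\<lambda>m. diffs (pmf p) m * s ^ m) sums deriv (pgf p) s"
    using assms by (intro diffs_pmf_sums_deriv_pgf) simp
  have "0 \<le> (\<Sum>m. diffs (pmf p) m * s ^ m)"
    using assms sums_summable[OF sums] by (intro suminf_nonneg) (simp_all add: diffs_def)
  then show ?thesis using sums_unique[OF sums] by simp
qed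

text \<open>As an extended-real-valued integral the generating function needs no convergence side
  conditions, which makes it convenient to push through the branching mechanism.\<close>

definition pgf_ennreal :: "nat pmf \<Rightarrow> real \<Rightarrow> ennreal" where
  "pgf_ennreal p t = (\<integral>\<^sup>+x. ennreal (t ^ x) \<partial>measure_pmf p)"

lemma pgf_ennreal_eq_suminf: "0 \<le> t \<Longrightarrow> pgf_ennreal p t = (\<Sum>x. ennreal (pmf p x * t ^ x))"
  unfolding pgf_ennreal_def
  by (simp add: nn_integral_measure_pmf nn_integral_count_space_nat ennreal_mult)

lemma pgf_ennreal_eq_pgf: "0 \<le> t \<Longrightarrow> t \<le> 1 \<Longrightarrow> pgf_ennreal p t = ennreal (pgf p t)"
  by (simp add: pgf_ennreal_eq_suminf pgf_def suminf_ennreal2 summable_pgf_series)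

lemma pgf_ennreal_at_0: "pgf_ennreal p 0 = ennreal (pmf p 0)"
proof -
  have "pgf_ennreal p 0 = (\<integral>\<^sup>+x. indicator {0} x \<partial>measure_pmf p)"
    unfolding pgf_ennreal_def by (intro nn_integral_cong) (auto simp: indicator_def)
  then show ?thesis by (simp add: emeasure_pmf_single)
qed

lemma pgf_ennreal_sum_iid:
  assumes "0 \<le> t" "t \<le> 1"
  shows "pgf_ennreal (sum_iid p m) t = ennreal (pgf p t ^ m)"
proof (induction m)
  case 0
  show ?case by (simp add: pgf_ennreal_def)
next
  case (Suc m)
  have "pgf_ennreal (sum_iid p (Suc m)) t
          = (\<integral>\<^sup>+a. \<integral>\<^sup>+b. ennreal (t ^ a) * ennreal (t ^ b) \<partial>sum_iid p m \<partial>p)"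
    unfolding pgf_ennreal_def using assms by (simp add: power_add ennreal_mult)
  also have "\<dots> = pgf_ennreal p t * pgf_ennreal (sum_iid p m) t"
    unfolding pgf_ennreal_def by (simp add: nn_integral_cmult nn_integral_multc)
  finally show ?case
    using Suc assms by (simp add: pgf_ennreal_eq_pgf ennreal_mult pgf_in_unit_interval)
qed

lemma fcomp_below: "n \<le> k \<Longrightarrow> fcomp q k n t = t"
  by (induction n arbitrary: t) auto

lemma fcomp_in_unit_interval: "0 \<le> t \<Longrightarrow> t \<le> 1 \<Longrightarrow> 0 \<le> fcomp q k n t \<and> fcomp q k n t \<le> 1"
  by (induction n arbitrary: t) (auto simp: pgf_in_unit_interval)

lemma fcomp_pred: "1 \<le> k \<Longrightarrow> k \<le> n \<Longrightarrow> fcomp q (k - 1) n t = pgf (q k) (fcomp q k n t)"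
proof (induction n arbitrary: t)
  case (Suc n)
  then show ?case by (cases "k = Suc n") (auto simp: fcomp_below)
qed simp

lemma pgf_ennreal_evolve:
  assumes "0 \<le> t" "t \<le> 1"
  shows "pgf_ennreal (evolve q k \<mu> n) t = pgf_ennreal \<mu> (fcomp q k n t)"
  using assms
proof (induction n arbitrary: t)
  case (Suc n)
  show ?case
  proof (cases "k \<le> n")
    case True
    have "pgf_ennreal (evolve q k \<mu> (Suc n)) t
            = (\<integral>\<^sup>+x. pgf_ennreal (sum_iid (q (Suc n)) x) t \<partial>evolve q k \<mu> n)"
      using True by (simp add: pgf_ennreal_def)
    also have "\<dots> = pgf_ennreal (evolve q k \<mu> n) (pgf (q (Suc n)) t)"
      using Suc.prems by (simp add: pgf_ennreal_sum_iid, simp add: pgf_ennreal_def)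
    finally show ?thesis
      using True Suc pgf_in_unit_interval[of t "q (Suc n)"] by simp
  qed (simp add: pgf_ennreal_def)
qed simp

lemma pmf_evolve_0: "ennreal (pmf (evolve q k \<mu> n) 0) = pgf_ennreal \<mu> (fcomp q k n 0)"
  using pgf_ennreal_evolve[of 0 q k \<mu> n] by (simp add: pgf_ennreal_at_0)

lemma pmf_embed_pmf_nat:
  assumes "\<And>i. 0 \<le> f i" "(\<Sum>i. ennreal (f i)) = 1"
  shows "pmf (embed_pmf f) i = f i"
  using assms by (intro pmf_embed_pmf) (auto simp: nn_integral_count_space_nat)

lemma suminf_ennreal_diagonal:
  fixes H :: "nat \<Rightarrow> nat \<Rightarrow> ennreal"
  shows "(\<Sum>i. \<Sum>j. H i j) = (\<Sum>m. \<Sum>j\<le>m. H (m - j) j)"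
proof -
  let ?H = "\<lambda>(i, j). H i j"
  have "(\<Sum>i. \<Sum>j. H i j) = (\<integral>\<^sup>+x. ?H x \<partial>count_space UNIV)"
    using nn_integral_fst_count_space[of ?H] by (simp add: nn_integral_count_space_nat)
  also have "\<dots> = (\<integral>\<^sup>+x. ?H ((\<lambda>(m, j). (m - j, j)) x) \<partial>count_space {(m, j). j \<le> m})"
    by (rule nn_integral_bij_count_space[symmetric])
       (rule bij_betwI[where g="\<lambda>(i, j). (i + j, j)"], auto)
  also have "\<dots> = (\<integral>\<^sup>+x. (\<lambda>(m, j). H (m - j) j * indicator {..m} j) x \<partial>count_space UNIV)"
    by (subst nn_integral_count_space_indicator)
       (auto intro!: nn_integral_cong simp: indicator_def)
  also have "\<dots> = (\<Sum>m. \<Sum>j. H (m - j) j * indicator {..m} j)"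
    using nn_integral_fst_count_space[of "\<lambda>(m, j). H (m - j) j * indicator {..m} j"]
    by (simp add: nn_integral_count_space_nat)
  also have "\<dots> = (\<Sum>m. \<Sum>j\<le>m. H (m - j) j)"
  proof (rule suminf_cong)
    fix m
    have "(\<Sum>j. H (m - j) j * indicator {..m} j) = (\<Sum>j\<le>m. H (m - j) j * indicator {..m} j)"
      by (rule suminf_finite) auto
    then show "(\<Sum>j. H (m - j) j * indicator {..m} j) = (\<Sum>j\<le>m. H (m - j) j)" by simp
  qed
  finally show ?thesis .
qed

lemma tail_mass_sums:
  fixes s :: real
  assumes "0 \<le> s" "s < 1"
  shows "(\<lambda>m. pmf p (Suc m) * (\<Sum>j\<le>m. s ^ j)) sums ((1 - pgf p s) / (1 - s))"
proof -
  have "(\<lambda>m. pmf p (Suc m)) sums (1 - pmf p 0)"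
    using sums_Suc_iff[of "pmf p"] pmf_nat_sums_1 by simp
  moreover have "(\<lambda>m. pmf p (Suc m) * s ^ Suc m) sums (pgf p s - pmf p 0)"
    using sums_Suc_iff[of "\<lambda>j. pmf p j * s ^ j"] pgf_sums[of s p] assms by simp
  ultimately have "(\<lambda>m. (pmf p (Suc m) - pmf p (Suc m) * s ^ Suc m) / (1 - s))
                     sums ((1 - pmf p 0 - (pgf p s - pmf p 0)) / (1 - s))"
    by (intro sums_divide sums_diff)
  moreover have "(pmf p (Suc m) - pmf p (Suc m) * s ^ Suc m) / (1 - s) = pmf p (Suc m) * (\<Sum>j\<le>m. s ^ j)"
    for m
  proof -
    have "(\<Sum>j\<le>m. s ^ j) = (1 - s ^ Suc m) / (1 - s)"
      using sum_gp_basic[of s m] assms by (simp add: field_simps)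
    then show ?thesis by (simp add: right_diff_distrib)
  qed
  ultimately show ?thesis by simp
qed

lemma summable_tail_series:
  fixes s :: real
  assumes "0 \<le> s" "s < 1"
  shows "summable (\<lambda>j. pmf p (j + i + 1) * s ^ j)"
proof (rule summable_comparison_test'[OF summable_geometric[of s]])
  show "norm s < 1" using assms by simp
  fix j show "norm (pmf p (j + i + 1) * s ^ j) \<le> s ^ j"
    using assms by (simp add: abs_mult mult_left_le_one_le pmf_le_1)
qed

lemma suminf_tail_geometric:
  fixes s :: real
  assumes "0 \<le> s" "s < 1"
  shows "(\<Sum>i. \<Sum>j. ennreal (pmf p (j + i + 1) * s ^ j)) = ennreal ((1 - pgf p s) / (1 - s))"
proof -
  have diagonal: "(\<Sum>j\<le>m. ennreal (pmf p (j + (m - j) + 1) * s ^ j))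
                    = ennreal (pmf p (Suc m) * (\<Sum>j\<le>m. s ^ j))" for m
  proof -
    have "(\<Sum>j\<le>m. ennreal (pmf p (j + (m - j) + 1) * s ^ j)) = (\<Sum>j\<le>m. ennreal (pmf p (Suc m) * s ^ j))"
      by (rule sum.cong) auto
    then show ?thesis using assms by (simp add: sum_distrib_left)
  qed
  have "(\<Sum>i. \<Sum>j. ennreal (pmf p (j + i + 1) * s ^ j)) = (\<Sum>m. ennreal (pmf p (Suc m) * (\<Sum>j\<le>m. s ^ j)))"
    by (simp only: suminf_ennreal_diagonal diagonal)
  also have "\<dots> = ennreal ((1 - pgf p s) / (1 - s))"
    using assms by (intro suminf_ennreal_eq tail_mass_sums) (auto intro!: mult_nonneg_nonneg sum_nonneg)
  finally show ?thesis .
qed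

lemma suminf_tail_deriv:
  fixes s :: real
  assumes "0 \<le> s" "s < 1"
  shows "(\<Sum>i. \<Sum>j. ennreal (pmf p (j + i + 1) * s ^ (j + i))) = ennreal (deriv (pgf p) s)"
proof -
  have diagonal: "(\<Sum>j\<le>m. ennreal (pmf p (j + (m - j) + 1) * s ^ (j + (m - j))))
                    = ennreal (diffs (pmf p) m * s ^ m)" for m
  proof -
    have "(\<Sum>j\<le>m. ennreal (pmf p (j + (m - j) + 1) * s ^ (j + (m - j))))
            = (\<Sum>j\<le>m. ennreal (pmf p (Suc m) * s ^ m))"
      by (rule sum.cong) auto
    also have "\<dots> = ennreal (\<Sum>j\<le>m. pmf p (Suc m) * s ^ m)"
      using assms by (intro sum_ennreal) auto
    finally show ?thesis by (simp add: diffs_def mult.assoc)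
  qed
  have "(\<Sum>i. \<Sum>j. ennreal (pmf p (j + i + 1) * s ^ (j + i))) = (\<Sum>m. ennreal (diffs (pmf p) m * s ^ m))"
    by (simp only: suminf_ennreal_diagonal diagonal)
  also have "\<dots> = ennreal (deriv (pgf p) s)"
    using assms by (intro suminf_ennreal_eq diffs_pmf_sums_deriv_pgf) (auto simp: diffs_def)
  finally show ?thesis .
qed

lemma pgf_ennreal_tail_law:
  fixes p :: "nat pmf" and s c :: real
  assumes s: "0 \<le> s" "s < 1" and normalized: "c * ((1 - pgf p s) / (1 - s)) = 1"
  defines "f \<equiv> \<lambda>i. c * (\<Sum>j. pmf p (j + i + 1) * s ^ j)"
  shows "pgf_ennreal (embed_pmf f) s = ennreal (c * deriv (pgf p) s)"
proof -
  have "0 \<le> (1 - pgf p s) / (1 - s)"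
    using s pgf_in_unit_interval[of s p] by simp
  with normalized have c: "0 \<le> c"
    by (smt (verit) mult_nonpos_nonneg)
  have tail: "ennreal (\<Sum>j. pmf p (j + i + 1) * s ^ j) = (\<Sum>j. ennreal (pmf p (j + i + 1) * s ^ j))"
    and tail_nonneg: "0 \<le> (\<Sum>j. pmf p (j + i + 1) * s ^ j)" for i
    using summable_tail_series[OF s, of p i] s
    by (auto intro!: suminf_ennreal2[symmetric] suminf_nonneg)
  have f: "ennreal (f i) = ennreal c * (\<Sum>j. ennreal (pmf p (j + i + 1) * s ^ j))" for i
    by (simp only: f_def ennreal_mult'[OF c] tail)
  have "(\<Sum>i. ennreal (f i)) = ennreal c * ennreal ((1 - pgf p s) / (1 - s))"
    by (simp only: f ennreal_suminf_cmult suminf_tail_geometric[OF s])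
  also have "\<dots> = 1"
    by (simp only: ennreal_mult'[OF c, symmetric] normalized ennreal_1)
  finally have pmf_f: "pmf (embed_pmf f) i = f i" for i
    using c tail_nonneg by (intro pmf_embed_pmf_nat) (simp_all add: f_def)
  have "ennreal (f i * s ^ i) = ennreal c * (\<Sum>j. ennreal (pmf p (j + i + 1) * s ^ (j + i)))" for i
  proof -
    have "ennreal (f i * s ^ i) = ennreal (f i) * ennreal (s ^ i)"
      using s by (simp add: ennreal_mult'')
    also have "\<dots> = ennreal c * (\<Sum>j. ennreal (pmf p (j + i + 1) * s ^ j) * ennreal (s ^ i))"
      by (simp only: f ennreal_suminf_multc mult.assoc)
    also have "\<dots> = ennreal c * (\<Sum>j. ennreal (pmf p (j + i + 1) * s ^ (j + i)))"
      using s by (simp only: ennreal_mult''[symmetric] zero_le_power mult.assoc power_add)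
    finally show ?thesis .
  qed
  then have "pgf_ennreal (embed_pmf f) s = ennreal c * (\<Sum>i. \<Sum>j. ennreal (pmf p (j + i + 1) * s ^ (j + i)))"
    using s by (simp add: pgf_ennreal_eq_suminf pmf_f)
  also have "\<dots> = ennreal (c * deriv (pgf p) s)"
    by (simp only: suminf_tail_deriv[OF s] ennreal_mult'[OF c])
  finally show ?thesis .
qed

lemma pgf_ennreal_truncated_geometric:
  fixes s :: real
  assumes s: "0 \<le> s" "s < 1" and z: "1 \<le> z"
  defines "g \<equiv> \<lambda>i. if i \<le> z - 1 then (1 - s) / (1 - s ^ z) * s ^ (z - i - 1) else 0"
  shows "pgf_ennreal (embed_pmf g) s = ennreal ((1 - s) / (1 - s ^ z) * (real z * s ^ (z - 1)))"
proof -
  have sz: "s ^ z < 1"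
    using s z by (simp add: power_less_one_iff)
  have g_nonneg: "0 \<le> g i" for i
    using s sz by (simp add: g_def)
  have g_support: "g i = 0" if "i \<notin> {..<z}" for i
    using that z by (simp add: g_def)
  have "(\<Sum>i<z. g i) = (1 - s) / (1 - s ^ z) * (\<Sum>i<z. s ^ (z - Suc i))"
    using z by (auto simp: g_def sum_distrib_left intro!: sum.cong)
  also have "\<dots> = 1"
  proof -
    have "(1 - s) * (\<Sum>i<z. s ^ (z - Suc i)) = 1 - s ^ z"
      by (rule one_diff_power_eq'[symmetric])
    then show ?thesis using sz by (simp only: times_divide_eq_left) simp
  qed
  finally have g_sum: "(\<Sum>i. ennreal (g i)) = 1"
    using g_nonneg g_support by (subst suminf_finite[of "{..<z}"]) auto
  have pmf_g: "pmf (embed_pmf g) i = g i" for i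
    using g_nonneg g_sum by (rule pmf_embed_pmf_nat)
  have "g i * s ^ i = (1 - s) / (1 - s ^ z) * s ^ (z - 1)" if "i < z" for i
    using that by (simp add: g_def mult.assoc flip: power_add)
  then have "(\<Sum>i<z. g i * s ^ i) = real z * ((1 - s) / (1 - s ^ z) * s ^ (z - 1))"
    by simp
  moreover have "pgf_ennreal (embed_pmf g) s = (\<Sum>i. ennreal (g i * s ^ i))"
    using s by (simp add: pgf_ennreal_eq_suminf pmf_g)
  moreover have "\<dots> = ennreal (\<Sum>i<z. g i * s ^ i)"
    using s g_nonneg g_support by (subst suminf_finite[of "{..<z}"]) auto
  ultimately show ?thesis by (simp add: mult_ac)
qed

lemma pmf_Zhat_law_initial_0:
  assumes z: "1 \<le> z" and pm1: "pm1 q z n > 0"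
  shows "pmf (Zhat_law q z n 0) 0 = pp q 0 n / pm1 q z n * deriv (fgen q z 0) (fcomp q 0 n 0)"
proof -
  define s where "s = fcomp q 0 n 0"
  have s_unit: "0 \<le> s" "s \<le> 1"
    using fcomp_in_unit_interval[of 0 q 0 n] by (simp_all add: s_def)
  have pm1_eq: "pm1 q z n = 1 - s ^ z"
    by (simp add: pm1_def s_def)
  with pm1 s_unit have "s < 1"
    by (cases "s = 1") simp_all
  have "Yhat q z n 0 = embed_pmf (\<lambda>i. if i \<le> z - 1 then (1 - s) / (1 - s ^ z) * s ^ (z - i - 1) else 0)"
    unfolding Yhat_def pm1_def s_def by simp
  then have "ennreal (pmf (Zhat_law q z n 0) 0) = ennreal ((1 - s) / (1 - s ^ z) * (real z * s ^ (z - 1)))"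
    using pgf_ennreal_truncated_geometric[OF s_unit(1) \<open>s < 1\<close> z]
    by (simp add: Zhat_law_def pmf_evolve_0 flip: s_def)
  then have "pmf (Zhat_law q z n 0) 0 = (1 - s) / (1 - s ^ z) * (real z * s ^ (z - 1))"
    using pm1 s_unit by (simp add: pm1_eq)
  moreover have "deriv (fgen q z 0) s = real z * s ^ (z - 1)"
    by (simp add: fgen_def DERIV_imp_deriv DERIV_pow)
  ultimately show ?thesis
    by (simp add: pp_def pm1_eq flip: s_def)
qed

lemma pmf_Zhat_law_0:
  assumes k: "1 \<le> k" "k \<le> n" and pp: "pp q k n > 0" "pp q (k - 1) n > 0"
  shows "pmf (Zhat_law q z n k) 0 = pp q k n / pp q (k - 1) n * deriv (fgen q z k) (fcomp q k n 0)"
proof -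
  define s where "s = fcomp q k n 0"
  define c where "c = pp q k n / pp q (k - 1) n"
  have s: "0 \<le> s" "s < 1"
    using fcomp_in_unit_interval[of 0 q k n] pp(1) by (simp_all add: s_def pp_def)
  have "pgf (q k) s = fcomp q (k - 1) n 0"
    using fcomp_pred[OF k] by (simp add: s_def)
  then have normalized: "c * ((1 - pgf (q k) s) / (1 - s)) = 1"
    using pp by (simp add: c_def pp_def s_def)
  have "ennreal (pmf (Zhat_law q z n k) 0) = pgf_ennreal (Yhat q z n k) s"
    by (simp add: Zhat_law_def pmf_evolve_0 s_def)
  also have "\<dots> = ennreal (c * deriv (pgf (q k)) s)"
    using pgf_ennreal_tail_law[OF s normalized] k by (simp add: Yhat_def c_def s_def)
  finally have "pmf (Zhat_law q z n k) 0 = c * deriv (pgf (q k)) s"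
    using pp s by (simp add: c_def deriv_pgf_nonneg)
  then show ?thesis
    using k by (simp add: fgen_def c_def s_def)
qed

lemma prod_lessThan_ratio_telescope:
  fixes a :: "nat \<Rightarrow> 'a::field"
  assumes "\<And>k. k < m \<Longrightarrow> a k \<noteq> 0"
  shows "(\<Prod>k<m. a (Suc k) / a k) * a 0 = a m"
  using assms
proof (induction m)
  case (Suc m)
  have "(\<Prod>k<Suc m. a (Suc k) / a k) * a 0 = ((\<Prod>k<m. a (Suc k) / a k) * a 0) * (a (Suc m) / a m)"
    by (simp add: ac_simps)
  also have "\<dots> = a m * (a (Suc m) / a m)"
    using Suc by simp
  also have "\<dots> = a (Suc m)"
    using Suc.prems by simp
  finally show ?case .
qed simp

theorem lemma3p1:
  fixes q :: "nat \<Rightarrow> nat pmf" and n z :: nat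
  assumes "n \<ge> 1" and "z \<ge> 1"
    and "\<And>k. k < n \<Longrightarrow> pp q k n > 0"
    and "pm1 q z n > 0"
  shows "measure_pmf.prob (Pi_pmf {..<n} 0 (Zhat_law q z n))
             {\<omega>. (\<Sum>k<n. \<omega> k) = 0} = (\<Prod>k<n. pmf (Zhat_law q z n k) 0)
         \<and> (\<Prod>k<n. pmf (Zhat_law q z n k) 0)
           = pp q (n - 1) n / pm1 q z n * (\<Prod>k<n. deriv (fgen q z k) (fcomp q k n 0))"
proof
  have "{\<omega>. (\<Sum>k<n. \<omega> k) = 0} = Pi {..<n} (\<lambda>_. {0::nat})"
    by (auto simp: Pi_def)
  then show "measure_pmf.prob (Pi_pmf {..<n} 0 (Zhat_law q z n)) {\<omega>. (\<Sum>k<n. \<omega> k) = 0}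
               = (\<Prod>k<n. pmf (Zhat_law q z n k) 0)"
    by (simp add: measure_Pi_pmf_Pi measure_pmf_single)
  define a where "a k = (if k = 0 then pm1 q z n else pp q (k - 1) n)" for k
    \<comment> \<open>a k is p_{k-1,n}, with the index -1 shifted to 0\<close>
  have a_pos: "a k > 0" if "k \<le> n" for k
    using that assms(1,3,4) by (simp add: a_def)
  have factor: "pmf (Zhat_law q z n k) 0 = a (Suc k) / a k * deriv (fgen q z k) (fcomp q k n 0)"
    if "k < n" for k
    using that assms pmf_Zhat_law_initial_0 pmf_Zhat_law_0[of k n q]
    by (cases "k = 0") (simp_all add: a_def)
  have "(\<Prod>k<n. a (Suc k) / a k) * a 0 = a n"
    using a_pos by (intro prod_lessThan_ratio_telescope) (metis less_imp_le less_irrefl)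
  then have telescoped: "(\<Prod>k<n. a (Suc k) / a k) = pp q (n - 1) n / pm1 q z n"
    using a_pos[of 0] assms(1) by (simp add: eq_divide_eq a_def)
  have "(\<Prod>k<n. pmf (Zhat_law q z n k) 0)
          = (\<Prod>k<n. a (Suc k) / a k * deriv (fgen q z k) (fcomp q k n 0))"
    by (rule prod.cong) (simp_all add: factor)
  then show "(\<Prod>k<n. pmf (Zhat_law q z n k) 0)
               = pp q (n - 1) n / pm1 q z n * (\<Prod>k<n. deriv (fgen q z k) (fcomp q k n 0))"
    by (simp only: prod.distrib telescoped)
qed

end
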